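(* If $a,b$ are integers with $a>1$ and $b>1$, then \[\overline{p}(a)\,\overline{p}(b)>\overline{p}(a+b).\]
   Context: An overpartition of a nonnegative integer $n$ is a partition of $n$ in which the first occurrence of each distinct part may be overlined. $\overline{p}(n)$ denotes the number of overpartitions of $n$. *)

theory Defs
  imports Main "HOL-Library.Multiset"
begin

text \<open>An overpartition of n: a partition M of n together with the set S of distinct
part sizes whose first occurrence is overlined (any subset of the distinct parts).\<close>

definition overpartitions :: "nat \<Rightarrow> (nat multiset \<times> nat set) set" where
  "overpartitions n = {(M, S). (\<forall>x\<in>#M. 0 < x) \<and> sum_mset M = n \<and> S \<subseteq> set_mset M}"

definition overpartition_count :: "nat \<Rightarrow> nat" where
  "overpartition_count n = card (overpartitions n)"

end

theory Submission
  imports Defs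
begin

text \<open>Write \<open>p(n)\<close> for the number of overpartitions of \<open>n\<close> and \<open>E(n)\<close> for the set of
  overpartitions of \<open>n\<close> without a non-overlined part 1. Removing a non-overlined 1 shows
  \<open>p(n) = p(n - 1) + |E(n)|\<close>, hence \<open>p(b + a) = p(b) + |E(b + 1)| + \<dots> + |E(b + a)|\<close>
  and \<open>p(a) = 1 + |E(1)| + \<dots> + |E(a)|\<close>. An overpartition of \<open>b\<close> and an element of \<open>E(j)\<close> combine
  into an element of \<open>E(b + j)\<close> by absorbing the ones of the former into the latter, and every
  element of \<open>E(b + j)\<close> arises this way (split off a maximal sub-multiset of sum at most \<open>b\<close>
  and make up the difference with ones). Thus \<open>|E(b + j)| \<le> p(b) |E(j)|\<close>, strictly for
  \<open>j = 2 \<le> b\<close> where the combination is not injective, and summing over \<open>j\<close> gives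
  \<open>p(a + b) < p(a) p(b)\<close>.\<close>

lemma overpartitions_iff:
  "(M, S) \<in> overpartitions n \<longleftrightarrow> (\<forall>x\<in>#M. 0 < x) \<and> sum_mset M = n \<and> S \<subseteq> set_mset M"
  by (simp add: overpartitions_def)

lemma member_le_sum_mset: "(x::nat) \<in># M \<Longrightarrow> x \<le> sum_mset M"
  by (auto dest: multi_member_split)

lemma size_le_sum_mset: "\<forall>x\<in>#M. 0 < (x::nat) \<Longrightarrow> size M \<le> sum_mset M"
  by (induction M) auto

lemma finite_overpartitions: "finite (overpartitions n)"
proof (rule finite_subset)
  show "overpartitions n \<subseteq> (\<Union>k\<le>n. multisets_of_size {1..n} k) \<times> Pow {1..n}"
  proof
    fix p assume p: "p \<in> overpartitions n"
    obtain M S where p_eq: "p = (M, S)" by fastforce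
    from p p_eq have pos: "\<forall>x\<in>#M. 0 < x" and sum: "sum_mset M = n" and S: "S \<subseteq> set_mset M"
      by (simp_all add: overpartitions_iff)
    have "set_mset M \<subseteq> {1..n}"
      using pos sum member_le_sum_mset by (fastforce simp: Suc_le_eq)
    moreover have "size M \<le> n"
      using size_le_sum_mset[OF pos] sum by simp
    ultimately show "p \<in> (\<Union>k\<le>n. multisets_of_size {1..n} k) \<times> Pow {1..n}"
      using S p_eq by (auto simp: multisets_of_size_def)
  qed
qed (auto intro: finite_multisets_of_size)

lemma overpartitions_0: "overpartitions 0 = {({#}, {})}"
proof -
  have "M = {#}" if "\<forall>x\<in>#M. 0 < (x::nat)" "sum_mset M = 0" for M
    using that by (cases M) auto
  then show ?thesis by (fastforce simp: overpartitions_def)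
qed

lemma overpartition_count_0 [simp]: "overpartition_count 0 = 1"
  by (simp add: overpartition_count_def overpartitions_0)

definition one_free_overpartitions :: "nat \<Rightarrow> (nat multiset \<times> nat set) set" where
  "one_free_overpartitions n = {(M, S) \<in> overpartitions n. 1 \<notin># M}"

lemma one_free_overpartitions_iff:
  "(M, S) \<in> one_free_overpartitions n \<longleftrightarrow>
     (\<forall>x\<in>#M. 2 \<le> x) \<and> sum_mset M = n \<and> S \<subseteq> set_mset M"
proof -
  have "(0 < x \<and> x \<noteq> 1) \<longleftrightarrow> 2 \<le> x" for x :: nat
    by arith
  then show ?thesis
    unfolding one_free_overpartitions_def overpartitions_iff by blast
qed

lemma finite_one_free_overpartitions: "finite (one_free_overpartitions n)"
  using finite_overpartitions by (simp add: one_free_overpartitions_def case_prod_unfold)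

fun add_one_part :: "(nat multiset \<times> nat set) \<times> bool \<Rightarrow> nat multiset \<times> nat set" where
  "add_one_part ((M, S), overlined) = (add_mset 1 M, if overlined then insert 1 S else S)"

fun remove_one_part :: "nat multiset \<times> nat set \<Rightarrow> (nat multiset \<times> nat set) \<times> bool" where
  "remove_one_part (M, S) =
     (if 1 \<in> S \<and> count M 1 = 1 then ((M - {#1#}, S - {1}), True) else ((M - {#1#}, S), False))"

lemma bij_betw_add_one_part:
  "bij_betw add_one_part (overpartitions n \<times> {False} \<union> one_free_overpartitions n \<times> {True})
     {(M, S) \<in> overpartitions (Suc n). 1 \<in># M}"
proof (rule bij_betw_byWitness[where f' = remove_one_part])
  show "\<forall>x\<in>overpartitions n \<times> {False} \<union> one_free_overpartitions n \<times> {True}.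
          remove_one_part (add_one_part x) = x"
    by (auto simp: overpartitions_iff one_free_overpartitions_def count_eq_zero_iff)
  show "\<forall>y\<in>{(M, S) \<in> overpartitions (Suc n). 1 \<in># M}. add_one_part (remove_one_part y) = y"
    by (auto simp: overpartitions_iff)
  show "add_one_part ` (overpartitions n \<times> {False} \<union> one_free_overpartitions n \<times> {True})
          \<subseteq> {(M, S) \<in> overpartitions (Suc n). 1 \<in># M}"
    by (auto simp: overpartitions_iff one_free_overpartitions_def)
  show "remove_one_part ` {(M, S) \<in> overpartitions (Suc n). 1 \<in># M}
          \<subseteq> overpartitions n \<times> {False} \<union> one_free_overpartitions n \<times> {True}"
  proof (rule image_subsetI)
    fix p assume "p \<in> {(M, S) \<in> overpartitions (Suc n). 1 \<in># M}"
    then obtain M S where p: "p = (M, S)" and MS: "(M, S) \<in> overpartitions (Suc n)"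
      and "1 \<in># M" by blast
    then obtain M' where M: "M = add_mset 1 M'" by (blast dest: multi_member_split)
    show "remove_one_part p \<in> overpartitions n \<times> {False} \<union> one_free_overpartitions n \<times> {True}"
      using MS by (cases "1 \<in># M'") (auto simp: p M overpartitions_iff one_free_overpartitions_def)
  qed
qed

text \<open>A pair \<open>((M, S), True)\<close> of \<open>one_free_tagged n\<close> stands for the overpartition of \<open>n\<close>
  obtained by adding an overlined part 1 to \<open>(M, S)\<close>. So \<open>one_free_tagged n\<close> encodes the
  overpartitions of \<open>n\<close> without a non-overlined 1, and for \<open>n \<ge> 1\<close> there are exactly
  \<open>overpartition_count n - overpartition_count (n - 1)\<close> of them.\<close>

definition one_free_tagged :: "nat \<Rightarrow> ((nat multiset \<times> nat set) \<times> bool) set" where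
  "one_free_tagged n = one_free_overpartitions n \<times> {False} \<union> one_free_overpartitions (n - 1) \<times> {True}"

lemma finite_one_free_tagged: "finite (one_free_tagged n)"
  by (simp add: one_free_tagged_def finite_one_free_overpartitions)

lemma card_one_free_tagged:
  "card (one_free_tagged n) = card (one_free_overpartitions n) + card (one_free_overpartitions (n - 1))"
  unfolding one_free_tagged_def
  by (subst card_Un_disjoint) (auto simp: finite_one_free_overpartitions card_cartesian_product)

lemma overpartition_count_Suc:
  "overpartition_count (Suc n) = overpartition_count n + card (one_free_tagged (Suc n))"
proof -
  let ?with_one = "{(M, S) \<in> overpartitions (Suc n). 1 \<in># M}"
  have union: "overpartitions (Suc n) = one_free_overpartitions (Suc n) \<union> ?with_one"
    and disjoint: "one_free_overpartitions (Suc n) \<inter> ?with_one = {}"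
    unfolding one_free_overpartitions_def by fast+
  have "card ?with_one = card (overpartitions n \<times> {False} \<union> one_free_overpartitions n \<times> {True})"
    using bij_betw_add_one_part by (rule bij_betw_same_card[symmetric])
  also have "\<dots> = overpartition_count n + card (one_free_overpartitions n)"
    by (subst card_Un_disjoint)
       (simp_all add: finite_overpartitions finite_one_free_overpartitions card_cartesian_product
          overpartition_count_def disjoint_iff)
  finally have with_one: "card ?with_one = overpartition_count n + card (one_free_overpartitions n)" .
  have "finite ?with_one"
    using finite_overpartitions[of "Suc n"] by (rule finite_subset[rotated]) blast
  then have "card (overpartitions (Suc n)) = card (one_free_overpartitions (Suc n)) + card ?with_one"
    by (subst union) (rule card_Un_disjoint[OF finite_one_free_overpartitions _ disjoint])
  then show ?thesis
    using with_one by (simp add: overpartition_count_def card_one_free_tagged)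
qed

lemma overpartition_count_add:
  "overpartition_count (b + a) = overpartition_count b + (\<Sum>j = 1..a. card (one_free_tagged (b + j)))"
  by (induction a) (simp_all add: overpartition_count_Suc)

lemma submultiset_sum_gap:
  fixes L :: "nat multiset"
  assumes "b \<le> sum_mset L" and pos: "\<forall>x\<in>#L. 0 < x"
  obtains (exact) W where "W \<subseteq># L" "sum_mset W = b"
  | (gap) W p R where "L = W + add_mset p R" "sum_mset W < b" "b < sum_mset W + p" "\<forall>x\<in>#R. p \<le> x"
proof -
  obtain W where WL: "W \<subseteq># L" and Wb: "sum_mset W \<le> b"
    and max: "\<And>W'. W' \<subseteq># L \<Longrightarrow> sum_mset W' \<le> b \<Longrightarrow> sum_mset W' \<le> sum_mset W"
    using ex_has_greatest_nat[of "\<lambda>W. W \<subseteq># L \<and> sum_mset W \<le> b" "{#}" sum_mset "Suc b"] by auto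
  show thesis
  proof (cases "sum_mset W = b")
    case True
    with WL show thesis by (rule exact)
  next
    case False
    with Wb have less: "sum_mset W < b" by simp
    have "L - W \<noteq> {#}"
      using less assms(1) WL by (metis add_0 le_less_trans less_irrefl subset_mset.diff_add sum_mset.union)
    define p where "p = Min (set_mset (L - W))"
    then have "p \<in># L - W"
      using \<open>L - W \<noteq> {#}\<close> by simp
    then obtain R where LW: "L - W = add_mset p R"
      by (blast dest: multi_member_split)
    have L: "L = W + add_mset p R"
      using WL LW by (metis subset_mset.add_diff_inverse)
    have "p \<le> x" if "x \<in># L - W" for x
      using that by (simp add: p_def)
    then have R: "\<forall>x\<in>#R. p \<le> x"
      by (simp add: LW)
    have "b < sum_mset W + p"
    proof (rule ccontr)
      assume "\<not> b < sum_mset W + p"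
      then have "sum_mset (add_mset p W) \<le> sum_mset W"
        using max[of "add_mset p W"] L by simp
      then show False
        using pos L by simp
    qed
    from L less this R show thesis by (rule gap)
  qed
qed

text \<open>The ones of the first overpartition are absorbed: if the second carries the tagged
  overlined 1, all ones merge with it into a single part, overlined iff some 1 was; otherwise they
  are added to the smallest part of the second, except that an overlined 1 survives as the tag.\<close>

fun combine ::
  "(nat multiset \<times> nat set) \<times> (nat multiset \<times> nat set) \<times> bool \<Rightarrow> (nat multiset \<times> nat set) \<times> bool"
where
  "combine ((B, SB), (K, SK), t) =
    (let r = count B 1; B' = filter_mset (\<lambda>x. x \<noteq> 1) B in
     if r = 0 then ((B + K, SB \<union> SK), t)
     else if t then ((add_mset (r + 1) (B' + K), SB - {1} \<union> SK \<union> (if 1 \<in> SB then {r + 1} else {})), False)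
     else
       let c = Min (set_mset K); c' = c + r - (if 1 \<in> SB then 1 else 0) in
       ((add_mset c' (B' + (K - {#c#})), SB - {1} \<union> (SK - {c}) \<union> (if c \<in> SK then {c'} else {})),
        1 \<in> SB))"

lemma combine_without_ones:
  "1 \<notin># B \<Longrightarrow> combine ((B, SB), (K, SK), t) = ((B + K, SB \<union> SK), t)"
  by (simp add: count_eq_zero_iff)

lemma filter_mset_add_replicate_mset:
  "a \<notin># W \<Longrightarrow> filter_mset (\<lambda>x. x \<noteq> a) (W + replicate_mset r a) = W"
  by (induction W) auto

lemma combine_merge_ones:
  assumes "1 \<notin># W" and "0 < r"
  shows "combine ((W + replicate_mset r 1, SB), (K, SK), True) =
    ((add_mset (r + 1) (W + K), SB - {1} \<union> SK \<union> (if 1 \<in> SB then {r + 1} else {})), False)"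
proof -
  have "count (W + replicate_mset r 1) 1 = r"
    using assms(1) by (simp add: count_eq_zero_iff)
  moreover have "filter_mset (\<lambda>x. x \<noteq> 1) (W + replicate_mset r 1) = W"
    using assms(1) by (rule filter_mset_add_replicate_mset)
  ultimately show ?thesis
    using assms(2) by (simp only: combine.simps Let_def) simp
qed

lemma combine_absorb_ones:
  fixes SB :: "nat set"
  assumes "1 \<notin># W" and "0 < r" and "\<forall>x\<in>#R. c \<le> x"
  defines "c' \<equiv> c + r - (if 1 \<in> SB then 1 else 0)"
  shows "combine ((W + replicate_mset r 1, SB), (add_mset c R, SK), False) =
    ((add_mset c' (W + R), SB - {1} \<union> (SK - {c}) \<union> (if c \<in> SK then {c'} else {})), 1 \<in> SB)"
proof -
  have "count (W + replicate_mset r 1) 1 = r"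
    using assms(1) by (simp add: count_eq_zero_iff)
  moreover have "filter_mset (\<lambda>x. x \<noteq> 1) (W + replicate_mset r 1) = W"
    using assms(1) by (rule filter_mset_add_replicate_mset)
  moreover have "Min (set_mset (add_mset c R)) = c"
    using assms(3) by (auto intro: Min_eqI)
  ultimately show ?thesis
    using assms(2) unfolding c'_def by (simp only: combine.simps Let_def) simp
qed

lemma combine_preimage_tagged:
  assumes W: "\<forall>x\<in>#W. 2 \<le> x" and R: "\<forall>x\<in>#R. p \<le> x" and "0 < r" "r < p"
    and S: "S \<subseteq> set_mset (W + add_mset p R)"
  shows "((W + add_mset p R, S), True) \<in>
    combine ` (overpartitions (sum_mset W + r) \<times> one_free_tagged (p + 1 - r + sum_mset R))"
proof -
  define c where "c = p + 1 - r"
  define SB where "SB = insert 1 (S \<inter> set_mset W)"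
  define SK where "SK = S \<inter> set_mset R \<union> (if p \<in> S then {c} else {})"
  have "c \<le> p" "2 \<le> c"
    using \<open>0 < r\<close> \<open>r < p\<close> by (simp_all add: c_def)
  have B: "(W + replicate_mset r 1, SB) \<in> overpartitions (sum_mset W + r)"
    using W \<open>0 < r\<close> by (auto simp: overpartitions_iff SB_def sum_mset_replicate_mset)
  have "(add_mset c R, SK) \<in> one_free_overpartitions (c + sum_mset R)"
    using R \<open>c \<le> p\<close> \<open>2 \<le> c\<close> by (auto simp: one_free_overpartitions_iff SK_def)
  then have K: "((add_mset c R, SK), False) \<in> one_free_tagged (p + 1 - r + sum_mset R)"
    by (simp add: one_free_tagged_def c_def)
  have "1 \<notin># W"
    using W by force
  have "SB - {1} \<union> (SK - {c}) \<union> (if c \<in> SK then {p} else {}) = S"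
  proof (cases "c = p")
    case False
    then have "c \<notin># R"
      using R \<open>c \<le> p\<close> by force
    then show ?thesis
      using S \<open>1 \<notin># W\<close> False by (auto simp: SB_def SK_def)
  qed (use S \<open>1 \<notin># W\<close> in \<open>auto simp: SB_def SK_def\<close>)
  moreover have "combine ((W + replicate_mset r 1, SB), (add_mset c R, SK), False) =
      ((add_mset p (W + R), SB - {1} \<union> (SK - {c}) \<union> (if c \<in> SK then {p} else {})), True)"
  proof -
    have "c + r - 1 = p" "1 \<in> SB" "\<forall>x\<in>#R. c \<le> x"
      using R \<open>c \<le> p\<close> \<open>r < p\<close> by (auto simp: c_def SB_def)
    then show ?thesis
      using combine_absorb_ones[OF \<open>1 \<notin># W\<close> \<open>0 < r\<close>, of R c SB SK] by simp
  qed
  ultimately have "((W + add_mset p R, S), True) =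
      combine ((W + replicate_mset r 1, SB), (add_mset c R, SK), False)"
    by simp
  with B K show ?thesis
    by (intro rev_image_eqI[of "((W + replicate_mset r 1, SB), (add_mset c R, SK), False)"]) simp_all
qed

lemma combine_preimage_merge:
  assumes W: "\<forall>x\<in>#W. 2 \<le> x" and R: "\<forall>x\<in>#R. r + 1 \<le> x" and "0 < r"
    and S: "S \<subseteq> set_mset (W + add_mset (r + 1) R)"
  shows "((W + add_mset (r + 1) R, S), False) \<in>
    combine ` (overpartitions (sum_mset W + r) \<times> one_free_tagged (sum_mset R + 1))"
proof -
  define SB where "SB = S \<inter> set_mset W \<union> (if r + 1 \<in> S then {1} else {})"
  have B: "(W + replicate_mset r 1, SB) \<in> overpartitions (sum_mset W + r)"
    using W \<open>0 < r\<close> by (auto simp: overpartitions_iff SB_def sum_mset_replicate_mset)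
  have "(R, S \<inter> set_mset R) \<in> one_free_overpartitions (sum_mset R)"
    using R \<open>0 < r\<close> by (force simp: one_free_overpartitions_iff)
  then have K: "((R, S \<inter> set_mset R), True) \<in> one_free_tagged (sum_mset R + 1)"
    by (simp add: one_free_tagged_def)
  have "1 \<notin># W"
    using W by force
  then have "SB - {1} \<union> S \<inter> set_mset R \<union> (if 1 \<in> SB then {r + 1} else {}) = S"
    using S by (auto simp: SB_def)
  moreover have "combine ((W + replicate_mset r 1, SB), (R, S \<inter> set_mset R), True) =
      ((add_mset (r + 1) (W + R), SB - {1} \<union> S \<inter> set_mset R \<union> (if 1 \<in> SB then {r + 1} else {})), False)"
    using \<open>1 \<notin># W\<close> \<open>0 < r\<close> by (rule combine_merge_ones)
  ultimately have "((W + add_mset (r + 1) R, S), False) =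
      combine ((W + replicate_mset r 1, SB), (R, S \<inter> set_mset R), True)"
    by simp
  with B K show ?thesis
    by (intro rev_image_eqI[of "((W + replicate_mset r 1, SB), (R, S \<inter> set_mset R), True)"]) simp_all
qed

lemma combine_preimage_absorb:
  assumes W: "\<forall>x\<in>#W. 2 \<le> x" and R: "\<forall>x\<in>#R. p \<le> x" and "0 < r" "r + 1 < p"
    and S: "S \<subseteq> set_mset (W + add_mset p R)"
  shows "((W + add_mset p R, S), False) \<in>
    combine ` (overpartitions (sum_mset W + r) \<times> one_free_tagged (p - r + sum_mset R))"
proof -
  define c where "c = p - r"
  define SB where "SB = S \<inter> set_mset W"
  define SK where "SK = S \<inter> set_mset R \<union> (if p \<in> S then {c} else {})"
  have "c < p" "2 \<le> c"
    using \<open>0 < r\<close> \<open>r + 1 < p\<close> by (simp_all add: c_def)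
  have B: "(W + replicate_mset r 1, SB) \<in> overpartitions (sum_mset W + r)"
    using W \<open>0 < r\<close> by (auto simp: overpartitions_iff SB_def sum_mset_replicate_mset)
  have "(add_mset c R, SK) \<in> one_free_overpartitions (c + sum_mset R)"
    using R \<open>c < p\<close> \<open>2 \<le> c\<close> by (auto simp: one_free_overpartitions_iff SK_def)
  then have K: "((add_mset c R, SK), False) \<in> one_free_tagged (p - r + sum_mset R)"
    by (simp add: one_free_tagged_def c_def)
  have "1 \<notin># W"
    using W by force
  have "c \<notin># R"
    using R \<open>c < p\<close> by force
  then have "SB - {1} \<union> (SK - {c}) \<union> (if c \<in> SK then {p} else {}) = S"
    using S \<open>1 \<notin># W\<close> \<open>c < p\<close> by (auto simp: SB_def SK_def)
  moreover have "combine ((W + replicate_mset r 1, SB), (add_mset c R, SK), False) =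
      ((add_mset p (W + R), SB - {1} \<union> (SK - {c}) \<union> (if c \<in> SK then {p} else {})), False)"
  proof -
    have "c + r = p" "1 \<notin> SB" "\<forall>x\<in>#R. c \<le> x"
      using R \<open>c < p\<close> \<open>r + 1 < p\<close> \<open>1 \<notin># W\<close> by (auto simp: c_def SB_def)
    then show ?thesis
      using combine_absorb_ones[OF \<open>1 \<notin># W\<close> \<open>0 < r\<close>, of R c SB SK] by simp
  qed
  ultimately have "((W + add_mset p R, S), False) =
      combine ((W + replicate_mset r 1, SB), (add_mset c R, SK), False)"
    by simp
  with B K show ?thesis
    by (intro rev_image_eqI[of "((W + replicate_mset r 1, SB), (add_mset c R, SK), False)"]) simp_all
qed

lemma combine_preimage_exact:
  assumes "W \<subseteq># L" and parts: "\<forall>x\<in>#L. 2 \<le> x" and S: "S \<subseteq> set_mset L"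
  shows "((L, S), t) \<in> combine `
    (overpartitions (sum_mset W) \<times> one_free_tagged (sum_mset (L - W) + (if t then 1 else 0)))"
proof -
  let ?K = "L - W"
  have L: "L = W + ?K"
    using assms(1) by simp
  have "1 \<notin># W"
    using assms(1) parts by (force dest: mset_subset_eqD)
  have "(W, S \<inter> set_mset W) \<in> overpartitions (sum_mset W)"
    using assms(1) parts by (force simp: overpartitions_iff dest: mset_subset_eqD)
  moreover have "((?K, S \<inter> set_mset ?K), t) \<in> one_free_tagged (sum_mset ?K + (if t then 1 else 0))"
    using parts by (auto simp: one_free_tagged_def one_free_overpartitions_iff dest: in_diffD)
  moreover have "((L, S), t) = combine ((W, S \<inter> set_mset W), (?K, S \<inter> set_mset ?K), t)"
    using combine_without_ones[OF \<open>1 \<notin># W\<close>] S L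
    by (metis Int_Un_distrib Int_absorb2 set_mset_union)
  ultimately show ?thesis
    by (intro rev_image_eqI[of "((W, S \<inter> set_mset W), (?K, S \<inter> set_mset ?K), t)"]) simp_all
qed

lemma combine_preimage_gap:
  assumes W: "\<forall>x\<in>#W. 2 \<le> x" and R: "\<forall>x\<in>#R. p \<le> x"
    and "sum_mset W < b" "b < sum_mset W + p" and S: "S \<subseteq> set_mset (W + add_mset p R)"
    and sum: "sum_mset W + p + sum_mset R + (if t then 1 else 0) = m + b"
  shows "((W + add_mset p R, S), t) \<in> combine ` (overpartitions b \<times> one_free_tagged m)"
proof -
  define r where "r = b - sum_mset W"
  have "0 < r" "r < p" and b: "sum_mset W + r = b"
    using assms(3,4) by (simp_all add: r_def)
  show ?thesis
  proof (cases t)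
    case True
    then have "p + 1 - r + sum_mset R = m"
      using sum b \<open>r < p\<close> by simp
    then show ?thesis
      using combine_preimage_tagged[OF W R \<open>0 < r\<close> \<open>r < p\<close> S] True b by simp
  next
    case False
    show ?thesis
    proof (cases "p = r + 1")
      case True
      then have "sum_mset R + 1 = m"
        using sum b \<open>\<not> t\<close> by simp
      then show ?thesis
        using combine_preimage_merge[OF W _ \<open>0 < r\<close>, of R S] R S True \<open>\<not> t\<close> b by simp
    next
      case False
      then have "r + 1 < p" "p - r + sum_mset R = m"
        using sum b \<open>\<not> t\<close> \<open>r < p\<close> by simp_all
      then show ?thesis
        using combine_preimage_absorb[OF W R \<open>0 < r\<close> \<open>r + 1 < p\<close> S] \<open>\<not> t\<close> b by simp
    qed
  qed
qed

lemma one_free_tagged_subset_combine_image: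
  assumes "1 \<le> m"
  shows "one_free_tagged (m + b) \<subseteq> combine ` (overpartitions b \<times> one_free_tagged m)"
proof (rule subsetI)
  fix y assume y_mem: "y \<in> one_free_tagged (m + b)"
  obtain L S t where y: "y = ((L, S), t)"
    by (metis prod.exhaust)
  have parts: "\<forall>x\<in>#L. 2 \<le> x" and S: "S \<subseteq> set_mset L"
    and sum: "sum_mset L + (if t then 1 else 0) = m + b"
    using y_mem assms by (auto simp: y one_free_tagged_def one_free_overpartitions_iff)
  have "b \<le> sum_mset L" "\<forall>x\<in>#L. 0 < x"
    using sum assms parts by (auto split: if_splits)
  then show "y \<in> combine ` (overpartitions b \<times> one_free_tagged m)"
  proof (cases rule: submultiset_sum_gap)
    case (exact W)
    moreover have "sum_mset (L - W) + (if t then 1 else 0) = m"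
    proof -
      have "sum_mset L = b + sum_mset (L - W)"
        using exact by (metis subset_mset.add_diff_inverse sum_mset.union)
      with sum show ?thesis
        by simp
    qed
    ultimately show ?thesis
      using combine_preimage_exact[OF \<open>W \<subseteq># L\<close> parts S, of t] y by simp
  next
    case (gap W p R)
    then show ?thesis
      using combine_preimage_gap[of W R p b S t m] parts S sum y by simp
  qed
qed

lemma card_one_free_tagged_add_le:
  assumes "1 \<le> m"
  shows "card (one_free_tagged (m + b)) \<le> overpartition_count b * card (one_free_tagged m)"
proof -
  have finite: "finite (overpartitions b \<times> one_free_tagged m)"
    by (simp add: finite_overpartitions finite_one_free_tagged)
  have "card (one_free_tagged (m + b)) \<le> card (combine ` (overpartitions b \<times> one_free_tagged m))"
    using one_free_tagged_subset_combine_image[OF assms] finite by (intro card_mono) simp_all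
  also have "\<dots> \<le> card (overpartitions b \<times> one_free_tagged m)"
    using finite by (rule card_image_le)
  finally show ?thesis
    by (simp add: card_cartesian_product overpartition_count_def)
qed

lemma combine_not_inj_on:
  assumes "2 \<le> b"
  shows "\<not> inj_on combine (overpartitions b \<times> one_free_tagged 2)"
proof -
  let ?x = "(({#b#}, {}), ({#2#}, {2}), False)"
  let ?y = "(({#2#} + replicate_mset (b - 2) 1, {2}), ({#2#}, {}), False)"
  have "?x \<in> overpartitions b \<times> one_free_tagged 2" "?y \<in> overpartitions b \<times> one_free_tagged 2"
    using assms
    by (auto simp: overpartitions_iff one_free_tagged_def one_free_overpartitions_iff sum_mset_replicate_mset)
  moreover have "?x \<noteq> ?y"
    by simp
  moreover have "combine ?x = combine ?y"
  proof (cases "b = 2")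
    case False
    then have "combine ?y = ((add_mset b {#2#}, {2}), False)"
      using assms combine_absorb_ones[of "{#2#}" "b - 2" "{#}" 2 "{2}" "{}"] by (simp del: combine.simps)
    moreover have "combine ?x = ((add_mset b {#2#}, {2}), False)"
      using assms by (simp add: combine_without_ones del: combine.simps)
    ultimately show ?thesis
      by simp
  qed simp
  ultimately show ?thesis
    unfolding inj_on_def by blast
qed

lemma card_one_free_tagged_2_add_less:
  assumes "2 \<le> b"
  shows "card (one_free_tagged (2 + b)) < overpartition_count b * card (one_free_tagged 2)"
proof -
  have finite: "finite (overpartitions b \<times> one_free_tagged 2)"
    by (simp add: finite_overpartitions finite_one_free_tagged)
  have "card (one_free_tagged (2 + b)) \<le> card (combine ` (overpartitions b \<times> one_free_tagged 2))"
    using one_free_tagged_subset_combine_image[of 2 b] finite by (intro card_mono) simp_all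
  also have "\<dots> < card (overpartitions b \<times> one_free_tagged 2)"
    using finite combine_not_inj_on[OF assms] card_image_le[OF finite, of combine]
    by (metis inj_on_iff_eq_card le_neq_implies_less)
  finally show ?thesis
    by (simp add: card_cartesian_product overpartition_count_def)
qed

theorem theorem1p1:
  fixes a b :: nat
  assumes "a > 1" and "b > 1"
  shows "overpartition_count a * overpartition_count b > overpartition_count (a + b)"
proof -
  let ?p = overpartition_count and ?T = "\<lambda>n. card (one_free_tagged n)"
  have "(\<Sum>j = 1..a. ?T (b + j)) < (\<Sum>j = 1..a. ?p b * ?T j)"
  proof (rule sum_strict_mono_ex1)
    show "\<forall>j\<in>{1..a}. ?T (b + j) \<le> ?p b * ?T j"
      using card_one_free_tagged_add_le by (simp add: add.commute)
    show "\<exists>j\<in>{1..a}. ?T (b + j) < ?p b * ?T j"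
      using card_one_free_tagged_2_add_less assms by (intro bexI[of _ 2]) (simp_all add: add.commute)
  qed simp
  then have "?p (b + a) < ?p b + ?p b * (\<Sum>j = 1..a. ?T j)"
    using overpartition_count_add[of b a] by (simp add: sum_distrib_left)
  also have "\<dots> = ?p a * ?p b"
    using overpartition_count_add[of 0 a] by simp
  finally show ?thesis
    by (simp add: add.commute)
qed

end
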